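(* Let $\Xi>1$, $\rho:[1,\Xi]\to\mathbb{R}$ continuous, $Z>0$ and $c>-1$, and define for integers $l\geq 0$ \[ \rho_l:=\frac{\delta_{l,0}}{\sqrt{Z}}-\frac12\int_1^\Xi\frac{dT\,\rho(T)}{\sqrt{T+c}^{\,3+2l}}, \] assuming $\rho_0\neq 0$. For integers $B\geq 3$ and $0\le M\le B-3$ define \[ \gamma^M_B:=\frac{1}{\rho_0^{B-3}}\sum_{K=0}^{B-3-M}\frac{(B-3+K)!}{(B-3-M)!\,M!}\,B_{B-3-M,K}\Big(\Big\{-\frac{(2r+1)!!\,\rho_r}{(r+1)\rho_0}\Big\}_{r=1}^{B-2-M-K}\Big), \] and set $\gamma^M_B:=0$ for $M<0$ or $M>B-3$. Then $\gamma^M_3=\delta_{M,0}$, and for all $B\geq 4$ and $0\le M\le B-3$: \[ \sum_{j=0}^{B-3-M}\binom{M+j}{j}(2j+1)!!\,\rho_j\,\gamma^{M+j}_B=\gamma^{M-1}_{B-1}, \qquad \sum_{j=0}^{B-4-M}\binom{M+1+j}{j+1}(2j+3)!!\,\rho_j\,\gamma^{M+1+j}_B=(2M+B-1)\,\gamma^M_{B-1}. \] Moreover, $(\gamma^M_B)$ is the unique family of numbers with $\gamma^M_3=\delta_{M,0}$ satisfying the first of these equations for all $B\geq4$, $0\le M\le B-3$.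
   Context: Bell polynomials: $B_{0,k}(\{\})=\delta_{k,0}$, and for $n\geq1$, $B_{n,k}(x_1,\dots,x_{n-k+1})=\sum\frac{n!}{j_1!j_2!\cdots j_{n-k+1}!}\big(\frac{x_1}{1!}\big)^{j_1}\cdots\big(\frac{x_{n-k+1}}{(n-k+1)!}\big)^{j_{n-k+1}}$, the sum over nonnegative integers with $j_1+\dots+j_{n-k+1}=k$ and $1j_1+2j_2+\dots+(n-k+1)j_{n-k+1}=n$ (so $B_{n,0}=0$ for $n\ge1$). $(2j+1)!!=1\cdot3\cdots(2j+1)$, with $(-1)!!=1$. *)

theory Defs
  imports "HOL-Analysis.Analysis"
begin

text \<open>Partial Bell polynomial B_{n,k}(x_1,...,x_{n-k+1}); the variables are given as a
  function x :: nat => real, of which only x 1, ..., x (n-k+1) are used.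
  Convention: B_{0,k} = delta_{k,0}; for n >= 1 the defining sum (empty when k = 0);
  B_{n,k} = 0 for k > n (never used in the statement).\<close>
definition bell_poly :: "nat \<Rightarrow> nat \<Rightarrow> (nat \<Rightarrow> real) \<Rightarrow> real" where
  "bell_poly n k x =
     (if n = 0 then (if k = 0 then 1 else 0)
      else if k > n then 0
      else (\<Sum>j\<in>{j \<in> {1..n-k+1} \<rightarrow>\<^sub>E {0..k}.
                  (\<Sum>i\<in>{1..n-k+1}. j i) = k \<and> (\<Sum>i\<in>{1..n-k+1}. i * j i) = n}.
              fact n / (\<Prod>i\<in>{1..n-k+1}. fact (j i))
              * (\<Prod>i\<in>{1..n-k+1}. (x i / fact i) ^ (j i))))"

definition odd_dfact :: "nat \<Rightarrow> real" where
  "odd_dfact j = (\<Prod>i\<in>{0..j}. real (2 * i + 1))"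

definition rho_l :: "real \<Rightarrow> real \<Rightarrow> real \<Rightarrow> (real \<Rightarrow> real) \<Rightarrow> nat \<Rightarrow> real" where
  "rho_l Z c Xi \<rho> l =
     (if l = 0 then 1 / sqrt Z else 0)
     - 1/2 * integral {1..Xi} (\<lambda>T. \<rho> T / sqrt (T + c) ^ (3 + 2 * l))"

definition gamma :: "(nat \<Rightarrow> real) \<Rightarrow> nat \<Rightarrow> int \<Rightarrow> real" where
  "gamma r B M =
     (if M < 0 \<or> M > int B - 3 then 0
      else let m = nat M in
        1 / r 0 ^ (B - 3) *
        (\<Sum>K = 0..B-3-m.
           fact (B - 3 + K) / (fact (B - 3 - m) * fact m)
           * bell_poly (B - 3 - m) K (\<lambda>s. - odd_dfact s * r s / (real (s + 1) * r 0))))"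

end

(*
  Up to the factor N! / (r_0^N M!), gamma^M_(N+3) is the coefficient of t^(N-M) in
  E_N = sum_K binom(N+K, K) h^K = (1 - h)^-(N+1), because B_(n,K)(x) = n!/K! [t^n] h_x^K
  for the exponential generating function h_x = sum_i x_i t^i / i!.  For the Bell arguments
  occurring in gamma one has 1 - h = U := sum_j (2j+1)!! r_j t^j / ((j+1)! r_0), and the two
  sums of the proposition are coefficients of (U + t U') E_(N+1) and U E_(N+1).  The
  relations U E_(N+1) = E_N and E_N' = (N+1) E_(N+1) U' reduce them to the right-hand sides.
  Uniqueness holds because the term j = 0 of the recursion is r_0 gamma^M_B.
*)

theory Submission
  imports Defs "HOL-Computational_Algebra.Formal_Power_Series"
begin

unbundle no vec_syntax
notation fps_nth (infixl \<open>$\<close> 75)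

section \<open>Bell polynomials as power series coefficients\<close>

text \<open>The bound b on the multiplicities only serves to make the index set finite; it is
  irrelevant as soon as b \<ge> k.\<close>
definition multinomial_sum :: "nat \<Rightarrow> nat set \<Rightarrow> (nat \<Rightarrow> 'a::field_char_0) \<Rightarrow> nat \<Rightarrow> nat \<Rightarrow> 'a" where
  "multinomial_sum b A c k n =
     (\<Sum>j\<in>{j \<in> A \<rightarrow>\<^sub>E {0..b}. (\<Sum>i\<in>A. j i) = k \<and> (\<Sum>i\<in>A. i * j i) = n}.
        \<Prod>i\<in>A. c i ^ j i / fact (j i))"

lemma multinomial_sum_empty: "multinomial_sum b {} c k n = (if k = 0 \<and> n = 0 then 1 else 0)"
  by (simp add: multinomial_sum_def)

lemma multinomial_sum_insert:
  assumes fin: "finite A" and aA: "a \<notin> A" and kb: "k \<le> b"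
  shows "multinomial_sum b (insert a A) c k n =
    (\<Sum>m=0..k. if a * m \<le> n then c a ^ m / fact m * multinomial_sum b A c (k - m) (n - a * m) else 0)"
proof -
  let ?P = "\<lambda>B k n j. (\<Sum>i\<in>B. j i) = k \<and> (\<Sum>i\<in>B. i * j i) = n"
  let ?F = "\<lambda>j. \<Prod>i\<in>A. c i ^ j i / fact (j i)"
  have PiE_sum: "multinomial_sum b B c k n =
      (\<Sum>j\<in>B \<rightarrow>\<^sub>E {0..b}. if ?P B k n j then \<Prod>i\<in>B. c i ^ j i / fact (j i) else 0)"
    if "finite B" for B k n
    unfolding multinomial_sum_def using that by (simp add: sum.inter_filter finite_PiE)
  have agree: "(g(a:=m)) i = g i" if "i \<in> A" for g :: "nat \<Rightarrow> nat" and m i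
    using aA that by auto
  have upd: "(\<Sum>i\<in>insert a A. (g(a:=m)) i) = m + sum g A"
            "(\<Sum>i\<in>insert a A. i * (g(a:=m)) i) = a * m + (\<Sum>i\<in>A. i * g i)"
            "(\<Prod>i\<in>insert a A. c i ^ (g(a:=m)) i / fact ((g(a:=m)) i)) = c a ^ m / fact m * ?F g"
    for g :: "nat \<Rightarrow> nat" and m
    using fin aA agree by (simp_all cong: sum.cong prod.cong)
  have pointwise:
    "(if ?P (insert a A) k n (g(a:=m)) then \<Prod>i\<in>insert a A. c i ^ (g(a:=m)) i / fact ((g(a:=m)) i) else 0)
     = (if ?P A (k - m) (n - a * m) g \<and> m \<le> k \<and> a * m \<le> n then c a ^ m / fact m * ?F g else 0)"
    for g m unfolding upd by auto
  have "multinomial_sum b (insert a A) c k n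
      = (\<Sum>(m, g)\<in>{0..b} \<times> (A \<rightarrow>\<^sub>E {0..b}).
           if ?P A (k - m) (n - a * m) g \<and> m \<le> k \<and> a * m \<le> n then c a ^ m / fact m * ?F g else 0)"
    unfolding PiE_sum[OF finite_insert[THEN iffD2, OF fin]] PiE_insert_eq
    by (subst sum.reindex[OF inj_combinator[OF aA]])
       (simp only: comp_def case_prod_beta pointwise split_def)
  also have "\<dots> = (\<Sum>m=0..b. if m \<le> k \<and> a * m \<le> n
                      then c a ^ m / fact m * multinomial_sum b A c (k - m) (n - a * m) else 0)"
    unfolding sum.cartesian_product[symmetric] PiE_sum[OF fin]
    by (intro sum.cong refl) (auto simp: sum_distrib_left if_distrib cong: if_cong)
  also have "\<dots> = (\<Sum>m=0..k. if a * m \<le> n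
                      then c a ^ m / fact m * multinomial_sum b A c (k - m) (n - a * m) else 0)"
    using kb by (intro sum.mono_neutral_cong_right) auto
  finally show ?thesis .
qed

lemma fps_power_nth_multinomial:
  fixes c :: "nat \<Rightarrow> 'a::field_char_0"
  assumes "finite A" and "k \<le> b"
  shows "((\<Sum>i\<in>A. fps_const (c i) * fps_X ^ i) ^ k) $ n = fact k * multinomial_sum b A c k n"
  using assms
proof (induction A arbitrary: k n rule: finite_induct)
  case empty
  then show ?case by (simp add: multinomial_sum_empty power_0_left)
next
  case (insert a A)
  let ?G = "\<Sum>i\<in>A. fps_const (c i) * fps_X ^ i"
  have "((fps_const (c a) * fps_X ^ a + ?G) ^ k) $ n
      = (\<Sum>m=0..k. of_nat (k choose m) * c a ^ m * (if a * m \<le> n then (?G ^ (k - m)) $ (n - a * m) else 0))"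
    unfolding binomial_ring atLeast0AtMost fps_sum_nth
    by (intro sum.cong refl)
       (simp add: power_mult_distrib fps_of_nat mult.assoc fps_X_power_mult_nth
             fps_const_power flip: power_mult)
  also have "\<dots> = fact k * (\<Sum>m=0..k. if a * m \<le> n
                     then c a ^ m / fact m * multinomial_sum b A c (k - m) (n - a * m) else 0)"
    unfolding sum_distrib_left
    using insert.IH insert.prems by (intro sum.cong refl) (auto simp: binomial_fact)
  finally show ?case
    using insert by (simp add: multinomial_sum_insert)
qed

lemma fps_power_nth_below:
  fixes F :: "'a::comm_semiring_1 fps"
  assumes "F $ 0 = 0" and "m < k"
  shows "(F ^ k) $ m = 0"
proof (cases "F = 0")
  case False
  then have "subdegree F \<noteq> 0" using assms(1) by (simp add: subdegree_eq_0_iff)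
  then have "m < k * subdegree F" using assms(2) by (simp add: less_le_trans)
  then show ?thesis by (rule fps_pow_nth_below_subdegree)
qed (use assms in \<open>simp add: power_0_left\<close>)

lemma fps_power_nth_cong:
  fixes F G :: "'a::comm_semiring_1 fps"
  assumes "F $ 0 = 0" "G $ 0 = 0" "\<And>i. i \<le> L \<Longrightarrow> F $ i = G $ i" "n < L + k"
  shows "(F ^ k) $ n = (G ^ k) $ n"
  using assms(4)
proof (induction k arbitrary: n)
  case (Suc k)
  have "F $ i * (F ^ k) $ (n - i) = G $ i * (G ^ k) $ (n - i)" if "i \<le> n" for i
  proof (cases "i = 0 \<or> i \<le> L")
    case True
    then show ?thesis using assms Suc by (cases "i = 0") auto
  next
    case False
    have "n - i < k" using False Suc.prems that by auto
    then show ?thesis using assms(1,2) by (simp add: fps_power_nth_below)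
  qed
  then show ?case by (simp add: fps_mult_nth)
qed simp

definition bell_egf :: "(nat \<Rightarrow> real) \<Rightarrow> real fps" where
  "bell_egf x = Abs_fps (\<lambda>i. if i = 0 then 0 else x i / fact i)"

lemma bell_poly_eq_fps_power_nth:
  assumes "k \<le> n"
  shows "bell_poly n k x = fact n / fact k * (bell_egf x ^ k) $ n"
proof (cases "n = 0")
  case True
  then show ?thesis using assms by (simp add: bell_poly_def)
next
  case False
  define L where "L = n - k + 1"
  define c where "c i = x i / fact i" for i
  define G where "G = (\<Sum>i\<in>{1..L}. fps_const (c i) * fps_X ^ i)"
  have "bell_poly n k x = (\<Sum>j\<in>{j \<in> {1..L} \<rightarrow>\<^sub>E {0..k}.
      (\<Sum>i\<in>{1..L}. j i) = k \<and> (\<Sum>i\<in>{1..L}. i * j i) = n}.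
        fact n / (\<Prod>i\<in>{1..L}. fact (j i)) * (\<Prod>i\<in>{1..L}. (x i / fact i) ^ (j i)))"
    using False assms by (simp add: bell_poly_def L_def)
  also have "\<dots> = fact n * multinomial_sum k {1..L} c k n"
    unfolding multinomial_sum_def sum_distrib_left
    by (intro sum.cong refl) (simp add: c_def prod_dividef power_divide prod.distrib mult.commute)
  also have "\<dots> = fact n / fact k * (G ^ k) $ n"
    unfolding G_def fps_power_nth_multinomial[OF finite_atLeastAtMost order_refl] by simp
  also have "(G ^ k) $ n = (bell_egf x ^ k) $ n"
  proof (rule fps_power_nth_cong[where L = L])
    have "G $ i = (\<Sum>j\<in>{1..L}. if i = j then c j else 0)" for i
      unfolding G_def fps_sum_nth by (intro sum.cong refl) (simp add: fps_X_power_nth)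
    then show "G $ i = bell_egf x $ i" if "i \<le> L" for i
      using that by (simp add: bell_egf_def c_def)
  qed (auto simp: G_def bell_egf_def L_def fps_sum_nth)
  finally show ?thesis .
qed

section \<open>The generating series of gamma\<close>

text \<open>The coefficients of (1 - X)^-(N+1).\<close>
definition neg_binomial_fps :: "nat \<Rightarrow> 'a::comm_ring_1 fps" where
  "neg_binomial_fps N = Abs_fps (\<lambda>K. of_nat ((N + K) choose K))"

lemma neg_binomial_fps_Suc_mult: "neg_binomial_fps (Suc N) * (1 - fps_X) = neg_binomial_fps N"
proof (rule fps_ext)
  fix K
  show "(neg_binomial_fps (Suc N) * (1 - fps_X)) $ K = neg_binomial_fps N $ K"
  proof (cases K)
    case (Suc K')
    have "(Suc N + Suc K') choose Suc K' = ((Suc N + K') choose K') + ((N + Suc K') choose Suc K')"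
      using binomial_Suc_Suc[of "N + Suc K'" K'] by simp
    then show ?thesis
      by (simp add: Suc neg_binomial_fps_def algebra_simps)
  qed (simp add: neg_binomial_fps_def algebra_simps)
qed

lemma fps_deriv_neg_binomial_fps:
  "fps_deriv (neg_binomial_fps N) = fps_const (of_nat (Suc N)) * neg_binomial_fps (Suc N)"
proof (rule fps_ext)
  fix n
  have "N + (n + 1) = Suc (n + N)" "Suc N + n = Suc (n + N)" by simp_all
  then have "(n + 1) * ((N + (n + 1)) choose (n + 1)) = Suc N * ((Suc N + n) choose n)"
    using Suc_times_binomial_add[of n N] by (simp only: Suc_eq_plus1)
  then show "fps_deriv (neg_binomial_fps N) $ n
      = (fps_const (of_nat (Suc N)) * neg_binomial_fps (Suc N)) $ n"
    unfolding fps_deriv_nth fps_mult_left_const_nth neg_binomial_fps_def fps_nth_Abs_fps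
    by (simp only: of_nat_mult[symmetric])
qed

lemma neg_binomial_fps_compose_Suc_mult:
  fixes H :: "'a::idom fps"
  assumes "H $ 0 = 0"
  shows "(neg_binomial_fps (Suc N) oo H) * (1 - H) = neg_binomial_fps N oo H"
proof -
  have "(neg_binomial_fps (Suc N) oo H) * (1 - H) = (neg_binomial_fps (Suc N) * (1 - fps_X)) oo H"
    by (simp only: fps_compose_mult_distrib[OF assms] fps_compose_sub_distrib fps_compose_1
        fps_X_fps_compose_startby0[OF assms])
  then show ?thesis by (simp only: neg_binomial_fps_Suc_mult)
qed

lemma fps_deriv_neg_binomial_fps_compose:
  fixes H :: "'a::idom fps"
  assumes "H $ 0 = 0"
  shows "fps_deriv (neg_binomial_fps N oo H)
    = fps_const (of_nat (Suc N)) * (neg_binomial_fps (Suc N) oo H) * fps_deriv H"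
  by (simp only: fps_compose_deriv[OF assms] fps_deriv_neg_binomial_fps
      fps_const_mult_apply_left[symmetric])

text \<open>With E_N = (1 - H)^-(N+1), this is (N+1) (U + X U') E_(N+1) = (N+1) E_N - X E_N'
  for U = 1 - H, read off at X^n.\<close>
lemma neg_binomial_fps_compose_weighted_nth:
  fixes H :: "'a::idom fps"
  assumes "H $ 0 = 0"
  shows "of_nat (Suc N) * (((1 - H) + fps_X * fps_deriv (1 - H)) * (neg_binomial_fps (Suc N) oo H)) $ n
    = (of_nat (Suc N) - of_nat n) * (neg_binomial_fps N oo H) $ n"
proof -
  let ?c = "fps_const (of_nat (Suc N) :: 'a)"
  let ?E = "\<lambda>N. neg_binomial_fps N oo H"
  have "?c * (((1 - H) + fps_X * fps_deriv (1 - H)) * ?E (Suc N))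
      = ?c * ((?E (Suc N)) * (1 - H)) - fps_X * (?c * ?E (Suc N) * fps_deriv H)"
    by (simp add: algebra_simps)
  also have "\<dots> = ?c * ?E N - fps_X * fps_deriv (?E N)"
    using assms by (simp only: neg_binomial_fps_compose_Suc_mult fps_deriv_neg_binomial_fps_compose)
  finally have eq: "?c * (((1 - H) + fps_X * fps_deriv (1 - H)) * ?E (Suc N))
      = ?c * ?E N - fps_X * fps_deriv (?E N)" .
  have "(?c * ?E N - fps_X * fps_deriv (?E N)) $ n = (of_nat (Suc N) - of_nat n) * ?E N $ n"
    by (cases n) (simp_all add: algebra_simps)
  then show ?thesis
    by (simp only: eq[symmetric] fps_mult_left_const_nth)
qed

lemma odd_dfact_0 [simp]: "odd_dfact 0 = 1"
  by (simp add: odd_dfact_def)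

definition gamma_bell_egf :: "(nat \<Rightarrow> real) \<Rightarrow> real fps" where
  "gamma_bell_egf r = bell_egf (\<lambda>s. - odd_dfact s * r s / (real (s + 1) * r 0))"

definition gamma_fps :: "(nat \<Rightarrow> real) \<Rightarrow> nat \<Rightarrow> real fps" where
  "gamma_fps r N = neg_binomial_fps N oo gamma_bell_egf r"

definition rho_weighted_fps :: "(nat \<Rightarrow> real) \<Rightarrow> real fps" where
  "rho_weighted_fps r = Abs_fps (\<lambda>j. odd_dfact j * r j / (r 0 * fact j))"

lemma gamma_bell_egf_nth_0 [simp]: "gamma_bell_egf r $ 0 = 0"
  by (simp add: gamma_bell_egf_def bell_egf_def)

lemma one_minus_gamma_bell_egf_nth:
  assumes "r 0 \<noteq> 0"
  shows "(1 - gamma_bell_egf r) $ j = odd_dfact j * r j / (r 0 * fact (Suc j))"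
  using assms by (cases j) (simp_all add: gamma_bell_egf_def bell_egf_def odd_dfact_def field_simps)

lemma gamma_eq_gamma_fps_nth:
  assumes "r 0 \<noteq> 0" and "m \<le> N"
  shows "gamma r (N + 3) (int m) = fact N / (r 0 ^ N * fact m) * gamma_fps r N $ (N - m)"
proof -
  have "gamma r (N + 3) (int m) = (\<Sum>K = 0..N - m. 1 / r 0 ^ N * (fact (N + K) / (fact (N - m) * fact m)
           * bell_poly (N - m) K (\<lambda>s. - odd_dfact s * r s / (real (s + 1) * r 0))))"
    using assms(2) by (simp add: gamma_def sum_distrib_left)
  also have "\<dots> = (\<Sum>K = 0..N - m. fact N / (r 0 ^ N * fact m)
                       * (of_nat ((N + K) choose K) * (gamma_bell_egf r ^ K) $ (N - m)))"
  proof (intro sum.cong refl)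
    fix K assume "K \<in> {0..N - m}"
    moreover have "fact (N + K) = fact K * fact N * real ((N + K) choose K)"
      by (simp add: binomial_fact)
    ultimately show "1 / r 0 ^ N * (fact (N + K) / (fact (N - m) * fact m)
           * bell_poly (N - m) K (\<lambda>s. - odd_dfact s * r s / (real (s + 1) * r 0)))
        = fact N / (r 0 ^ N * fact m) * (of_nat ((N + K) choose K) * (gamma_bell_egf r ^ K) $ (N - m))"
      using assms(1) by (simp add: bell_poly_eq_fps_power_nth gamma_bell_egf_def)
  qed
  finally show ?thesis
    by (simp add: gamma_fps_def neg_binomial_fps_def fps_compose_nth sum_distrib_left)
qed

lemma fps_add_X_mult_deriv_nth:
  fixes F :: "'a::comm_ring_1 fps"
  shows "(F + fps_X * fps_deriv F) $ j = (1 + of_nat j) * F $ j"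
  by (cases j) (simp_all add: fps_X_mult_nth algebra_simps)

lemma rho_weighted_fps_eq:
  assumes "r 0 \<noteq> 0"
  shows "rho_weighted_fps r = (1 - gamma_bell_egf r) + fps_X * fps_deriv (1 - gamma_bell_egf r)"
proof (rule fps_ext)
  fix j
  show "rho_weighted_fps r $ j
      = ((1 - gamma_bell_egf r) + fps_X * fps_deriv (1 - gamma_bell_egf r)) $ j"
    unfolding fps_add_X_mult_deriv_nth one_minus_gamma_bell_egf_nth[of r, OF assms]
    by (simp add: rho_weighted_fps_def divide_simps)
qed

lemma rho_weighted_gamma_fps_nth:
  assumes "r 0 \<noteq> 0"
  shows "real (Suc N) * (rho_weighted_fps r * gamma_fps r (Suc N)) $ n
    = (real (Suc N) - real n) * gamma_fps r N $ n"
  using neg_binomial_fps_compose_weighted_nth[of "gamma_bell_egf r" N n] assms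
  by (simp add: rho_weighted_fps_eq gamma_fps_def)

lemma gamma_recursion_sum_eq:
  assumes "r 0 \<noteq> 0" and "M \<le> N"
  shows "(\<Sum>j = 0..N - M. real ((M + j) choose j) * odd_dfact j * r j * gamma r (N + 3) (int (M + j)))
     = fact N / (r 0 ^ N * fact M) * r 0 * (rho_weighted_fps r * gamma_fps r N) $ (N - M)"
  unfolding fps_mult_nth sum_distrib_left
proof (intro sum.cong refl)
  fix j assume j: "j \<in> {0..N - M}"
  then have g: "gamma r (N + 3) (int (M + j)) = fact N / (r 0 ^ N * fact (M + j)) * gamma_fps r N $ (N - M - j)"
    using assms gamma_eq_gamma_fps_nth[of r "M + j" N] by (simp add: diff_diff_add)
  have b: "real ((M + j) choose j) = fact (M + j) / (fact j * fact M)"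
    by (simp add: binomial_fact)
  show "real ((M + j) choose j) * odd_dfact j * r j * gamma r (N + 3) (int (M + j))
     = fact N / (r 0 ^ N * fact M) * r 0 * (rho_weighted_fps r $ j * gamma_fps r N $ (N - M - j))"
    unfolding g b using assms(1) by (simp add: rho_weighted_fps_def field_simps)
qed

lemma gamma_second_sum_eq:
  assumes "r 0 \<noteq> 0" and "N - M = Suc n"
  shows "(\<Sum>j = 0..<N - M. real ((M + 1 + j) choose (j + 1)) * odd_dfact (j + 1) * r j
              * gamma r (N + 3) (int (M + 1 + j)))
     = fact N / (r 0 ^ N * fact M) * r 0
        * (2 * (rho_weighted_fps r * gamma_fps r N) $ n + ((1 - gamma_bell_egf r) * gamma_fps r N) $ n)"
  unfolding assms(2) atLeastLessThanSuc_atLeastAtMost fps_mult_nth sum_distrib_left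
    sum.distrib[symmetric]
proof (intro sum.cong refl)
  fix j assume j: "j \<in> {0..n}"
  then have g: "gamma r (N + 3) (int (M + 1 + j))
      = fact N / (r 0 ^ N * fact (M + 1 + j)) * gamma_fps r N $ (n - j)"
  proof -
    have "M + 1 + j \<le> N" "N - (M + 1 + j) = n - j" using assms(2) j by auto
    then show ?thesis using gamma_eq_gamma_fps_nth[of r "M + 1 + j" N] assms(1) by simp
  qed
  have b: "real ((M + 1 + j) choose (j + 1)) = fact (M + 1 + j) / (fact (j + 1) * fact M)"
    by (subst binomial_fact) simp_all
  have d: "odd_dfact (j + 1) = real (2 * j + 3) * odd_dfact j"
    by (simp add: odd_dfact_def)
  show "real ((M + 1 + j) choose (j + 1)) * odd_dfact (j + 1) * r j
              * gamma r (N + 3) (int (M + 1 + j))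
      = fact N / (r 0 ^ N * fact M) * r 0 * (2 * (rho_weighted_fps r $ j * gamma_fps r N $ (n - j))
          + (1 - gamma_bell_egf r) $ j * gamma_fps r N $ (n - j))"
    unfolding g b d one_minus_gamma_bell_egf_nth[of r, OF assms(1)] using assms(1)
    by (simp add: rho_weighted_fps_def divide_simps)
       (simp add: algebra_simps)
qed

lemma gamma_3: "gamma r 3 M = (if M = 0 then 1 else 0)"
  by (simp add: gamma_def bell_poly_def)

lemma gamma_recursion:
  assumes "r 0 \<noteq> 0" and "4 \<le> B" and "M \<le> B - 3"
  shows "(\<Sum>j = 0..B-3-M. real ((M + j) choose j) * odd_dfact j * r j * gamma r B (int (M + j)))
    = gamma r (B - 1) (int M - 1)"
proof -
  define N where "N = B - 4"
  have B: "B = Suc N + 3" "B - 1 = N + 3" using assms(2) by (simp_all add: N_def)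
  have MN: "M \<le> Suc N" using assms(3) B by simp
  have lhs: "(\<Sum>j = 0..B-3-M. real ((M + j) choose j) * odd_dfact j * r j * gamma r B (int (M + j)))
      = fact (Suc N) / (r 0 ^ Suc N * fact M) * r 0 * (rho_weighted_fps r * gamma_fps r (Suc N)) $ (Suc N - M)"
    unfolding B using gamma_recursion_sum_eq[of r, OF assms(1) MN] by simp
  have rhs: "gamma r (B - 1) (int M - 1)
      = (if M = 0 then 0 else fact N / (r 0 ^ N * fact (M - 1)) * gamma_fps r N $ (Suc N - M))"
    using gamma_eq_gamma_fps_nth[of r, OF assms(1), of "M - 1" N] MN
    unfolding B(2) by (cases M) (simp_all add: gamma_def)
  have coeff: "real (Suc N) * (rho_weighted_fps r * gamma_fps r (Suc N)) $ (Suc N - M)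
      = real M * gamma_fps r N $ (Suc N - M)"
    using rho_weighted_gamma_fps_nth[of r, OF assms(1), of N "Suc N - M"] MN by (simp add: of_nat_diff)
  show ?thesis
  proof (cases M)
    case 0
    then show ?thesis unfolding lhs rhs using coeff by simp
  next
    case (Suc M')
    then show ?thesis
      unfolding lhs rhs using coeff assms(1)
      by (simp add: divide_simps del: of_nat_Suc)
  qed
qed

lemma gamma_second_recursion:
  assumes "r 0 \<noteq> 0" and "4 \<le> B" and "M \<le> B - 3"
  shows "(\<Sum>j = 0..<B-3-M. real ((M + 1 + j) choose (j + 1)) * odd_dfact (j + 1) * r j
              * gamma r B (int (M + 1 + j)))
    = real (2 * M + B - 1) * gamma r (B - 1) (int M)"
proof (cases "M = B - 3")
  case True
  then show ?thesis by (simp add: gamma_def)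
next
  case False
  define N where "N = B - 4"
  have B: "B = Suc N + 3" "B - 1 = N + 3" "real (2 * M + B - 1) = 2 * real M + real N + 3"
    using assms(2) by (simp_all add: N_def)
  define n where "n = N - M"
  have MN: "M \<le> N" and nM: "Suc N - M = Suc n" using assms(3) False B by (auto simp: n_def)
  have lhs: "(\<Sum>j = 0..<B-3-M. real ((M + 1 + j) choose (j + 1)) * odd_dfact (j + 1) * r j
              * gamma r B (int (M + 1 + j)))
      = fact (Suc N) / (r 0 ^ Suc N * fact M) * r 0 * (2 * (rho_weighted_fps r * gamma_fps r (Suc N)) $ n
          + ((1 - gamma_bell_egf r) * gamma_fps r (Suc N)) $ n)"
    unfolding B(1) using gamma_second_sum_eq[of r, OF assms(1) nM] by simp
  have rhs: "gamma r (B - 1) (int M) = fact N / (r 0 ^ N * fact M) * gamma_fps r N $ n"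
    unfolding B(2) n_def by (rule gamma_eq_gamma_fps_nth[of r, OF assms(1) MN])
  have "(1 - gamma_bell_egf r) * gamma_fps r (Suc N) = gamma_fps r N"
    using neg_binomial_fps_compose_Suc_mult[of "gamma_bell_egf r" N]
    by (simp add: gamma_fps_def mult.commute)
  moreover have "real (Suc N) * (rho_weighted_fps r * gamma_fps r (Suc N)) $ n
      = (real M + 1) * gamma_fps r N $ n"
    using rho_weighted_gamma_fps_nth[of r, OF assms(1), of N n] MN by (simp add: n_def)
  ultimately show ?thesis
    unfolding lhs rhs B(3) using assms(1)
    by (simp add: divide_simps del: of_nat_Suc) (simp add: algebra_simps)
qed

section \<open>Uniqueness\<close>

definition satisfies_gamma_recursion :: "(nat \<Rightarrow> real) \<Rightarrow> (nat \<Rightarrow> int \<Rightarrow> real) \<Rightarrow> bool" where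
  "satisfies_gamma_recursion r g \<longleftrightarrow> (\<forall>B M. 4 \<le> B \<and> M \<le> B - 3 \<longrightarrow>
     (\<Sum>j = 0..B-3-M. real ((M + j) choose j) * odd_dfact j * r j * g B (int (M + j)))
       = (if M = 0 then 0 else g (B - 1) (int M - 1)))"

lemma satisfies_gamma_recursionD:
  assumes "satisfies_gamma_recursion r g" and "4 \<le> B" and "M \<le> B - 3"
  shows "(\<Sum>j = 0..B-3-M. real ((M + j) choose j) * odd_dfact j * r j * g B (int (M + j)))
    = (if M = 0 then 0 else g (B - 1) (int M - 1))"
  using assms unfolding satisfies_gamma_recursion_def by blast

lemma gamma_satisfies_recursion:
  assumes "r 0 \<noteq> 0"
  shows "satisfies_gamma_recursion r (gamma r)"
  unfolding satisfies_gamma_recursion_def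
  using gamma_recursion[of r, OF assms] by (simp add: gamma_def)

text \<open>The term j = 0 of the recursion at (B, M) is r 0 * g B M, and all other terms involve
  g B M' with M' > M only; so descending induction on M, nested in induction on B,
  determines g from g 3 0.\<close>
lemma satisfies_gamma_recursion_unique:
  assumes "r 0 \<noteq> 0" and g: "satisfies_gamma_recursion r g" and h: "satisfies_gamma_recursion r h"
    and "g 3 0 = h 3 0" and "M \<le> N"
  shows "g (N + 3) (int M) = h (N + 3) (int M)"
  using assms(5)
proof (induction N arbitrary: M)
  case 0
  then show ?case using assms(4) by simp
next
  case (Suc N)
  from Suc.prems show ?case
  proof (induction "Suc N - M" arbitrary: M rule: less_induct)
    case less
    let ?t = "\<lambda>f j. real ((M + j) choose j) * odd_dfact j * r j * f (Suc N + 3) (int (M + j))"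
    have rec: "(\<Sum>j = 0..Suc N - M. ?t f j) = (if M = 0 then 0 else f (N + 3) (int M - 1))"
      if "satisfies_gamma_recursion r f" for f
      using satisfies_gamma_recursionD[OF that, of "Suc N + 3" M] less.prems
      by (simp add: add.commute)
    have "(if M = 0 then 0 else g (N + 3) (int M - 1)) = (if M = 0 then 0 else h (N + 3) (int M - 1))"
      using Suc.IH[of "M - 1"] less.prems by (cases M) auto
    moreover have "(\<Sum>j = Suc 0..Suc N - M. ?t g j) = (\<Sum>j = Suc 0..Suc N - M. ?t h j)"
    proof (intro sum.cong refl)
      fix j assume "j \<in> {Suc 0..Suc N - M}"
      then have "g (Suc N + 3) (int (M + j)) = h (Suc N + 3) (int (M + j))"
        using less.prems by (intro less.hyps) auto
      then show "?t g j = ?t h j" by simp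
    qed
    ultimately have "?t g 0 = ?t h 0"
      using rec[OF g] rec[OF h] unfolding sum.atLeast_Suc_atMost[OF le0] by linarith
    then show ?case using assms(1) by simp
  qed
qed

theorem proposition7:
  fixes Xi Z c :: real and \<rho> :: "real \<Rightarrow> real"
  defines "r \<equiv> rho_l Z c Xi \<rho>"
  assumes "Xi > 1" and "continuous_on {1..Xi} \<rho>" and "Z > 0" and "c > -1"
    and "r 0 \<noteq> 0"
  shows "(\<forall>M::int. gamma r 3 M = (if M = 0 then 1 else 0))
    \<and> (\<forall>B::nat. \<forall>M::nat. B \<ge> 4 \<and> M \<le> B - 3 \<longrightarrow>
          (\<Sum>j = 0..B-3-M. real ((M + j) choose j) * odd_dfact j * r j * gamma r B (int (M + j)))
            = gamma r (B - 1) (int M - 1)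
        \<and> (\<Sum>j = 0..<B-3-M. real ((M + 1 + j) choose (j + 1)) * odd_dfact (j + 1) * r j
              * gamma r B (int (M + 1 + j)))
            = real (2 * M + B - 1) * gamma r (B - 1) (int M))
    \<and> (\<forall>g :: nat \<Rightarrow> int \<Rightarrow> real.
          g 3 0 = 1
        \<and> (\<forall>B::nat. \<forall>M::nat. B \<ge> 4 \<and> M \<le> B - 3 \<longrightarrow>
              (\<Sum>j = 0..B-3-M. real ((M + j) choose j) * odd_dfact j * r j * g B (int (M + j)))
                = (if M = 0 then 0 else g (B - 1) (int M - 1)))
        \<longrightarrow> (\<forall>B::nat. \<forall>M::nat. B \<ge> 3 \<and> M \<le> B - 3 \<longrightarrow> g B (int M) = gamma r B (int M)))"
proof -
  have r0: "r 0 \<noteq> 0" by fact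
  have unique: "g B (int M) = gamma r B (int M)"
    if "g 3 0 = 1" and "satisfies_gamma_recursion r g" and "3 \<le> B" and "M \<le> B - 3"
    for g :: "nat \<Rightarrow> int \<Rightarrow> real" and B M
    using satisfies_gamma_recursion_unique[of r, OF r0 that(2) gamma_satisfies_recursion[of r, OF r0], of M "B - 3"]
      that by (simp add: gamma_3)
  show ?thesis
    using gamma_recursion[of r, OF r0] gamma_second_recursion[of r, OF r0]
      unique[unfolded satisfies_gamma_recursion_def]
    by (simp add: gamma_3)
qed

end
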